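(* Let $W$ and $V$ be B-DMCs which are symmetric, symmetrized under the same permutation, and suppose that for a given $N=2^n$ ($n\ge0$) and $i\in\{1,\dots,N\}$: (A) $\mathbb P_V[L_{V_N^{(i)}}(y_1^N)<1]\ge\mathbb P_V[L_{V_N^{(i)}}(y_1^N)>1]$, (B) $Pe_N^{(i)}(W,V)-Pe_N^{(i)}(V)\le0$. Then (A) and (B) hold with $(N,i)$ replaced by $(2N,2i-1)$, and (A) holds with $(N,i)$ replaced by $(2N,2i)$. However, (B) need not hold for $(2N,2i)$: e.g. for $\mathcal Y=\{0,e,1\}$, $W$ the binary symmetric channel with crossover probability $0.3$ (with $W(e|x)=0$) and $V$ given by $V(0|0)=0.4, V(e|0)=0.5, V(1|0)=0.1$, $V(y|1)=V(\pi(y)|0)$ with $\pi$ swapping $0,1$ and fixing $e$ (so $L_V$ takes values $1/4,1,4$), conditions (A) and (B) hold for $N=1,i=1$ but (B) fails for $N=2,i=2$.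
   Context: A B-DMC $W:\{0,1\}\to\mathcal Y$ is given by transition probabilities $W(y|x)$, $\mathcal Y$ finite; $L_W(y)=W(y|1)/W(y|0)$. $W,V$ are "symmetric, symmetrized under the same permutation" if there is an involutive permutation $\pi$ of $\mathcal Y$ with $W(y|1)=W(\pi(y)|0)$, $V(y|1)=V(\pi(y)|0)$ for all $y$. For a B-DMC $W$: $W^-(y_1y_2|u_1)=\sum_{u_2}\tfrac12W(y_1|u_1\oplus u_2)W(y_2|u_2)$, $W^+(y_1y_2u_1|u_2)=\tfrac12W(y_1|u_1\oplus u_2)W(y_2|u_2)$. Synthetic channels: $W_1^{(1)}=W$, $W_{2N}^{(2i-1)}=(W_N^{(i)})^-$, $W_{2N}^{(2i)}=(W_N^{(i)})^+$; an output of $W_N^{(i)}$ is written $(y_1^N,u_1^{i-1})$ as in Arıkan's construction and $L_{V_N^{(i)}}(y_1^N):=L_{V_N^{(i)}}(y_1^N,0_1^{i-1})$. With $L_1=L_{V_N^{(i)}}(y_1^N)$, $L_2=L_{V_N^{(i)}}(y_{N+1}^{2N})$: $L_{V_{2N}^{(2i-1)}}=\frac{L_1+L_2}{1+L_1L_2}$, $L_{V_{2N}^{(2i)}}=L_1L_2$. Notation: $W(y_1^N|0_1^N)=\prod_jW(y_j|0)$, $\mathbb P_W[E]=\sum_{y_1^N}W(y_1^N|0_1^N)\mathbf 1\{E\}$, $\mathbf H(\ell)=\mathbf 1\{\ell>1\}+\tfrac12\mathbf 1\{\ell=1\}$. Mismatched error probability: $Pe_N^{(i)}(W,V)=\sum_{u}\tfrac12\sum_{(y_1^N,u_1^{i-1})}W_N^{(i)}(y_1^N,u_1^{i-1}|u)\big[\mathbf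 1\{V_N^{(i)}(\cdot|u\oplus1)>V_N^{(i)}(\cdot|u)\}+\tfrac12\mathbf 1\{V_N^{(i)}(\cdot|u\oplus1)=V_N^{(i)}(\cdot|u)\}\big]$, evaluated at the output $(y_1^N,u_1^{i-1})$; $Pe_N^{(i)}(V)=Pe_N^{(i)}(V,V)$. For such symmetric $W,V$ it is known that $Pe_N^{(i)}(W,V)=\sum_{y_1^N}W(y_1^N|0_1^N)\mathbf H(L_{V_N^{(i)}}(y_1^N))$. *)

theory Defs
  imports Complex_Main
begin

text \<open>Binary-input channels.  Inputs are bits (False = 0, True = 1);
  a channel W is given by its transition probabilities W y x = W(y|x).\<close>

type_synonym 'y channel = "'y \<Rightarrow> bool \<Rightarrow> real"

definition bdmc :: "('y::finite) channel \<Rightarrow> bool" where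
  "bdmc W \<longleftrightarrow> (\<forall>y x. 0 \<le> W y x) \<and> (\<forall>x. (\<Sum>y\<in>UNIV. W y x) = 1)"

definition sym_same_perm :: "('y::finite) channel \<Rightarrow> 'y channel \<Rightarrow> bool" where
  "sym_same_perm W V \<longleftrightarrow> (\<exists>\<pi>. bij \<pi> \<and> (\<forall>y. \<pi> (\<pi> y) = y) \<and>
      (\<forall>y. W y True = W (\<pi> y) False) \<and> (\<forall>y. V y True = V (\<pi> y) False))"

text \<open>An output of W_N^(i) is a pair (y_1^N, u_1^(i-1)),
  represented as a pair of lists (ys, us).  The recursion follows Arikan's
  construction: for the doubled channel, the first half of the outputs and the
  bits u_odd XOR u_even feed the first copy, the second half of the outputs and
  u_even feed the second copy.\<close>

type_synonym 'y syn_channel = "'y list \<times> bool list \<Rightarrow> bool \<Rightarrow> real"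

definition odd_part :: "bool list \<Rightarrow> bool list" where
  "odd_part us = map (\<lambda>k. us ! (2*k)) [0..<length us div 2]"

definition even_part :: "bool list \<Rightarrow> bool list" where
  "even_part us = map (\<lambda>k. us ! (2*k+1)) [0..<length us div 2]"

definition xor_list :: "bool list \<Rightarrow> bool list \<Rightarrow> bool list" where
  "xor_list as bs = map2 (\<noteq>) as bs"

text \<open>Minus transform; N is the block length of the channel Q being transformed.
  Output (y_1^(2N), u_1^(2i-2)), input u_(2i-1).\<close>
definition chan_minus :: "nat \<Rightarrow> 'y syn_channel \<Rightarrow> 'y syn_channel" where
  "chan_minus N Q = (\<lambda>(ys, us) u1.
     (\<Sum>u2\<in>UNIV. 1/2 * Q (take N ys, xor_list (odd_part us) (even_part us)) (u1 \<noteq> u2)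
                       * Q (drop N ys, even_part us) u2))"

text \<open>Plus transform. Output (y_1^(2N), u_1^(2i-1)), input u_(2i).\<close>
definition chan_plus :: "nat \<Rightarrow> 'y syn_channel \<Rightarrow> 'y syn_channel" where
  "chan_plus N Q = (\<lambda>(ys, us) u2.
     (let us' = butlast us; u1 = last us in
      1/2 * Q (take N ys, xor_list (odd_part us') (even_part us')) (u1 \<noteq> u2)
          * Q (drop N ys, even_part us') u2))"

text \<open>synth W n i = W_N^(i) with N = 2^n, for 1 \<le> i \<le> N.\<close>
fun synth :: "'y channel \<Rightarrow> nat \<Rightarrow> nat \<Rightarrow> 'y syn_channel" where
  "synth W 0 i = (\<lambda>(ys, us) x. W (hd ys) x)"
| "synth W (Suc n) i =
     (if odd i then chan_minus (2^n) (synth W n ((i+1) div 2))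
      else chan_plus (2^n) (synth W n (i div 2)))"

definition syn_outputs :: "nat \<Rightarrow> nat \<Rightarrow> ('y list \<times> bool list) set" where
  "syn_outputs n i = {(ys, us). length ys = 2^n \<and> length us = i - 1}"

definition Pe_mis :: "('y::finite) channel \<Rightarrow> 'y channel \<Rightarrow> nat \<Rightarrow> nat \<Rightarrow> real" where
  "Pe_mis W V n i = (\<Sum>u\<in>UNIV. 1/2 * (\<Sum>out\<in>syn_outputs n i.
      synth W n i out u *
        ((if synth V n i out (\<not> u) > synth V n i out u then 1 else 0)
         + 1/2 * (if synth V n i out (\<not> u) = synth V n i out u then 1 else 0))))"

definition Pe :: "('y::finite) channel \<Rightarrow> nat \<Rightarrow> nat \<Rightarrow> real" where
  "Pe V n i = Pe_mis V V n i"

text \<open>L_(V_N^(i))(y_1^N) := L_(V_N^(i))(y_1^N, 0_1^(i-1)).\<close>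
definition LR :: "'y channel \<Rightarrow> nat \<Rightarrow> nat \<Rightarrow> 'y list \<Rightarrow> real" where
  "LR V n i ys = synth V n i (ys, replicate (i - 1) False) True
               / synth V n i (ys, replicate (i - 1) False) False"

text \<open>P_W[E] for an event E on y_1^N, N = 2^n, under the all-zero input.\<close>
definition prob_zero :: "('y::finite) channel \<Rightarrow> nat \<Rightarrow> ('y list \<Rightarrow> bool) \<Rightarrow> real" where
  "prob_zero W n E = (\<Sum>ys\<in>{ys. length ys = 2^n}.
      (\<Prod>j<length ys. W (ys ! j) False) * (if E ys then 1 else 0))"

definition condA :: "('y::finite) channel \<Rightarrow> nat \<Rightarrow> nat \<Rightarrow> bool" where
  "condA V n i \<longleftrightarrow> prob_zero V n (\<lambda>ys. LR V n i ys < 1) \<ge> prob_zero V n (\<lambda>ys. LR V n i ys > 1)"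

definition condB :: "('y::finite) channel \<Rightarrow> 'y channel \<Rightarrow> nat \<Rightarrow> nat \<Rightarrow> bool" where
  "condB W V n i \<longleftrightarrow> Pe_mis W V n i - Pe V n i \<le> 0"

datatype Y3 = Y0 | Ye | Y1

lemma UNIV_Y3: "(UNIV :: Y3 set) = {Y0, Ye, Y1}"
  using Y3.exhaust by auto

instance Y3 :: finite
  by standard (simp add: UNIV_Y3)

definition swap01 :: "Y3 \<Rightarrow> Y3" where
  "swap01 y = (case y of Y0 \<Rightarrow> Y1 | Ye \<Rightarrow> Ye | Y1 \<Rightarrow> Y0)"

definition W_ex :: "Y3 channel" where
  "W_ex y x = (let p = (case y of Y0 \<Rightarrow> 7/10 | Ye \<Rightarrow> 0 | Y1 \<Rightarrow> 3/10)
               in if x then (case swap01 y of Y0 \<Rightarrow> 7/10 | Ye \<Rightarrow> 0 | Y1 \<Rightarrow> 3/10) else p)"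

definition V_ex :: "Y3 channel" where
  "V_ex y x = (if x then (case swap01 y of Y0 \<Rightarrow> 4/10 | Ye \<Rightarrow> 5/10 | Y1 \<Rightarrow> 1/10)
               else (case y of Y0 \<Rightarrow> 4/10 | Ye \<Rightarrow> 5/10 | Y1 \<Rightarrow> 1/10))"

end

theory Submission
  imports Defs
begin

(* The three claims are proved independently.
   (B) for the minus channel, for arbitrary B-DMCs W and V: the outputs of W_2N^(2i-1) are
   the pairs of outputs of W_N^(i), and the mismatched decision on the minus channel errs
   iff exactly one of the two component decisions errs.  Hence Pe_2N^(2i-1)(W,V) = 2p(1-p)
   with p = Pe_N^(i)(W,V).  As t |-> 2t(1-t) is increasing on [0, 1/2] and
   Pe_N^(i)(V) <= 1/2, condition (B) passes from (N, i) to (2N, 2i-1).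
   (A) holds at every (N, i) for a symmetric V.  Write
   A = V_N^(i)(y, 0|1) and B = V_N^(i)(y, 0|0).  Two properties of (A, B) are preserved by
   both polar transforms: an involution of the outputs exchanges A and B (for N = 1 it is
   pi), and the law of (A, B) under V(y|0_1^N) is K times its law under the weight B.
   Together they give P_V[L > 1] = K sum B[A > B] <= K sum A[A > B] = K sum B[B > A]
   <= P_V[L < 1]. *)

lemma odd_part_Nil [simp]: "odd_part [] = []"
  by (simp add: odd_part_def)

lemma odd_part_single [simp]: "odd_part [a] = []"
  by (simp add: odd_part_def)

lemma odd_part_Cons2 [simp]: "odd_part (a # b # r) = a # odd_part r"
  by (simp add: odd_part_def upt_conv_Cons map_Suc_upt[symmetric] del: upt_Suc)

lemma even_part_Nil [simp]: "even_part [] = []"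
  by (simp add: even_part_def)

lemma even_part_single [simp]: "even_part [a] = []"
  by (simp add: even_part_def)

lemma even_part_Cons2 [simp]: "even_part (a # b # r) = b # even_part r"
  by (simp add: even_part_def upt_conv_Cons map_Suc_upt[symmetric] del: upt_Suc)

lemma length_odd_part [simp]: "length (odd_part us) = length us div 2"
  by (simp add: odd_part_def)

lemma length_even_part [simp]: "length (even_part us) = length us div 2"
  by (simp add: even_part_def)

lemma xor_list_Nil [simp]: "xor_list [] bs = []" "xor_list as [] = []"
  by (auto simp: xor_list_def)

lemma xor_list_Cons [simp]: "xor_list (a # as) (b # bs) = (a \<noteq> b) # xor_list as bs"
  by (simp add: xor_list_def)

lemma length_xor_list [simp]: "length (xor_list as bs) = min (length as) (length bs)"
  by (simp add: xor_list_def)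

lemma xor_list_cancel: "length as = length bs \<Longrightarrow> xor_list (xor_list as bs) bs = as"
  by (induct as bs rule: list_induct2) auto

lemma xor_list_replicate: "xor_list (replicate m a) (replicate m a) = replicate m False"
  by (induct m) auto

fun interleave :: "bool list \<Rightarrow> bool list \<Rightarrow> bool list" where
  "interleave (a # as) (c # cs) = a # c # interleave as cs"
| "interleave _ _ = []"

lemma length_interleave: "length as = length cs \<Longrightarrow> length (interleave as cs) = 2 * length as"
  by (induct as cs rule: list_induct2) auto

lemma odd_part_interleave: "length as = length cs \<Longrightarrow> odd_part (interleave as cs) = as"
  by (induct as cs rule: list_induct2) auto

lemma even_part_interleave: "length as = length cs \<Longrightarrow> even_part (interleave as cs) = cs"
  by (induct as cs rule: list_induct2) auto

lemma interleave_parts: "even (length us) \<Longrightarrow> interleave (odd_part us) (even_part us) = us"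
  by (induct us rule: induct_list012) auto

lemma interleave_replicate: "interleave (replicate m a) (replicate m a) = replicate (2 * m) a"
  by (induct m) (auto simp: numeral_2_eq_2)

lemma sum_lists_append:
  "(\<Sum>ys\<in>{ys. length ys = m + k}. F ys)
     = (\<Sum>y1\<in>{ys. length ys = m}. \<Sum>y2\<in>{ys. length ys = k}. F (y1 @ y2))"
proof -
  have "(\<Sum>ys\<in>{ys. length ys = m + k}. F ys)
      = (\<Sum>p\<in>{ys. length ys = m} \<times> {ys. length ys = k}. F (fst p @ snd p))"
    by (rule sum.reindex_bij_witness[where i = "\<lambda>p. fst p @ snd p" and j = "\<lambda>ys. (take m ys, drop m ys)"])
      auto
  then show ?thesis
    by (simp add: sum.cartesian_product split_def)
qed

lemma prod_nth_eq_prod_list: "(\<Prod>j<length xs. f (xs ! j)) = prod_list (map f xs)"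
  by (induct xs) (simp_all del: prod.lessThan_Suc add: prod.lessThan_Suc_shift)

lemma sum_outputs_0_1: "(\<Sum>out\<in>syn_outputs 0 1. G out) = (\<Sum>y\<in>(UNIV::'y::finite set). G ([y], []))"
  by (rule sum.reindex_bij_witness[where i = "\<lambda>y. ([y], [])" and j = "\<lambda>out. hd (fst out)"])
    (auto simp: syn_outputs_def length_Suc_conv)

text \<open>The outputs of the minus channel W_2N^(2j-1) are the pairs of outputs of W_N^(j):
  the second component of the pair carries the even bits of the prefix, the first one the
  xor of odd and even bits.\<close>

definition combine :: "'y list \<times> bool list \<Rightarrow> 'y list \<times> bool list \<Rightarrow> 'y list \<times> bool list" where
  "combine o1 o2 = (fst o1 @ fst o2, interleave (xor_list (snd o1) (snd o2)) (snd o2))"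

definition split_output ::
    "nat \<Rightarrow> 'y list \<times> bool list \<Rightarrow> ('y list \<times> bool list) \<times> ('y list \<times> bool list)" where
  "split_output N out = ((take N (fst out), xor_list (odd_part (snd out)) (even_part (snd out))),
                         (drop N (fst out), even_part (snd out)))"

lemma sum_outputs_minus:
  assumes "1 \<le> j"
  shows "(\<Sum>out\<in>syn_outputs (Suc n) (2*j-1). F out)
       = (\<Sum>o1\<in>syn_outputs n j. \<Sum>o2\<in>syn_outputs n j. F (combine o1 o2))"
proof -
  have "(\<Sum>out\<in>syn_outputs (Suc n) (2*j-1). F out)
      = (\<Sum>p\<in>syn_outputs n j \<times> syn_outputs n j. F (combine (fst p) (snd p)))"
    by (rule sum.reindex_bij_witness[where i = "\<lambda>p. combine (fst p) (snd p)" and j = "split_output (2^n)"])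
      (use assms in \<open>auto simp: syn_outputs_def combine_def split_output_def xor_list_cancel
         interleave_parts odd_part_interleave even_part_interleave length_interleave\<close>)
  then show ?thesis
    by (simp add: sum.cartesian_product split_def)
qed

lemma sum_outputs_plus:
  assumes "1 \<le> j"
  shows "(\<Sum>out\<in>syn_outputs (Suc n) (2*j). F out)
       = (\<Sum>b\<in>UNIV. \<Sum>out\<in>syn_outputs (Suc n) (2*j-1). F (fst out, snd out @ [b]))"
proof -
  have snoc: "butlast us @ [last us] = us" if "length us = 2*j - 1" for us :: "bool list"
    using that assms by (intro append_butlast_last_id) auto
  have "(\<Sum>out\<in>syn_outputs (Suc n) (2*j). F out)
      = (\<Sum>p\<in>syn_outputs (Suc n) (2*j-1) \<times> UNIV. F (fst (fst p), snd (fst p) @ [snd p]))"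
    by (rule sum.reindex_bij_witness[where i = "\<lambda>p. (fst (fst p), snd (fst p) @ [snd p])"
          and j = "\<lambda>out. ((fst out, butlast (snd out)), last (snd out))"])
      (use assms in \<open>auto simp: syn_outputs_def snoc\<close>)
  also have "\<dots> = (\<Sum>out\<in>syn_outputs (Suc n) (2*j-1). \<Sum>b\<in>UNIV. F (fst out, snd out @ [b]))"
    by (simp add: sum.cartesian_product split_def)
  also have "\<dots> = (\<Sum>b\<in>UNIV. \<Sum>out\<in>syn_outputs (Suc n) (2*j-1). F (fst out, snd out @ [b]))"
    by (rule sum.swap)
  finally show ?thesis .
qed


lemma synth_minus_combine:
  assumes "1 \<le> j" "o1 \<in> syn_outputs n j" "o2 \<in> syn_outputs n j"
  shows "synth W (Suc n) (2*j-1) (combine o1 o2) u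
       = (\<Sum>u2\<in>UNIV. 1/2 * synth W n j o1 (u \<noteq> u2) * synth W n j o2 u2)"
proof -
  have "odd (2*j-1)" "(2*j-1+1) div 2 = j" using assms(1) by auto
  then show ?thesis
    using assms(2,3)
    by (cases o1; cases o2)
      (simp add: chan_minus_def syn_outputs_def combine_def odd_part_interleave even_part_interleave
         xor_list_cancel)
qed

lemma synth_plus_combine:
  assumes "o1 \<in> syn_outputs n j" "o2 \<in> syn_outputs n j"
  shows "synth W (Suc n) (2*j) (fst (combine o1 o2), snd (combine o1 o2) @ [b]) u
       = 1/2 * synth W n j o1 (b \<noteq> u) * synth W n j o2 u"
  using assms
  by (cases o1; cases o2)
    (simp add: chan_plus_def syn_outputs_def combine_def odd_part_interleave even_part_interleave
       xor_list_cancel Let_def)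

lemma synth_nonneg: "bdmc W \<Longrightarrow> 0 \<le> synth W n i out x"
proof (induction n arbitrary: i out x)
  case 0
  then show ?case by (cases out) (auto simp: bdmc_def)
next
  case (Suc n)
  then show ?case
    by (cases out)
      (auto simp: chan_minus_def chan_plus_def Let_def intro!: sum_nonneg mult_nonneg_nonneg)
qed

lemma child_index_cases:
  fixes i n :: nat
  assumes "1 \<le> i" "i \<le> 2^Suc n"
  obtains (minus) j where "1 \<le> j" "j \<le> 2^n" "i = 2*j - 1"
        | (plus) j where "1 \<le> j" "j \<le> 2^n" "i = 2*j"
proof (cases "odd i")
  case True
  then show ?thesis using assms by (intro minus[of "(i+1) div 2"]) (auto elim!: oddE)
next
  case False
  then show ?thesis using assms by (intro plus[of "i div 2"]) (auto elim!: evenE)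
qed

lemma sum_pairs_factor:
  fixes c :: real
  shows "(\<Sum>a\<in>A. \<Sum>b\<in>B. \<Sum>u\<in>U. c * f a u * g b u)
       = (\<Sum>u\<in>U. c * ((\<Sum>a\<in>A. f a u) * (\<Sum>b\<in>B. g b u)))"
proof -
  have "(\<Sum>a\<in>A. \<Sum>b\<in>B. \<Sum>u\<in>U. c * f a u * g b u) = (\<Sum>a\<in>A. \<Sum>u\<in>U. \<Sum>b\<in>B. c * f a u * g b u)"
    by (rule sum.cong[OF refl], rule sum.swap)
  also have "\<dots> = (\<Sum>u\<in>U. \<Sum>a\<in>A. \<Sum>b\<in>B. c * f a u * g b u)"
    by (rule sum.swap)
  also have "\<dots> = (\<Sum>u\<in>U. c * ((\<Sum>a\<in>A. f a u) * (\<Sum>b\<in>B. g b u)))"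
    unfolding sum_product by (simp add: sum_distrib_left mult.assoc)
  finally show ?thesis .
qed

lemma synth_total:
  fixes W :: "('y::finite) channel"
  assumes "bdmc W"
  shows "1 \<le> i \<Longrightarrow> i \<le> 2^n \<Longrightarrow> (\<Sum>out\<in>syn_outputs n i. synth W n i out x) = 1"
proof (induction n arbitrary: i x)
  case 0
  then have "i = 1"
    by simp
  then show ?case
    using assms by (simp only: sum_outputs_0_1) (simp add: bdmc_def)
next
  case (Suc n)
  from Suc.prems show ?case
  proof (cases rule: child_index_cases)
    case (minus j)
    let ?S = "syn_outputs n j" and ?Q = "synth W n j"
    have "(\<Sum>out\<in>syn_outputs (Suc n) i. synth W (Suc n) i out x)
        = (\<Sum>o1\<in>?S. \<Sum>o2\<in>?S. \<Sum>u2\<in>UNIV. 1/2 * ?Q o1 (x \<noteq> u2) * ?Q o2 u2)"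
      unfolding minus(3) sum_outputs_minus[OF minus(1)]
      by (intro sum.cong refl synth_minus_combine minus(1))
    also have "\<dots> = (\<Sum>u2\<in>UNIV. 1/2 * ((\<Sum>o1\<in>?S. ?Q o1 (x \<noteq> u2)) * (\<Sum>o2\<in>?S. ?Q o2 u2)))"
      by (rule sum_pairs_factor)
    finally show ?thesis
      by (simp add: Suc.IH[OF minus(1,2)] UNIV_bool)
  next
    case (plus j)
    let ?S = "syn_outputs n j" and ?Q = "synth W n j"
    have "(\<Sum>out\<in>syn_outputs (Suc n) i. synth W (Suc n) i out x)
        = (\<Sum>b\<in>UNIV. \<Sum>o1\<in>?S. \<Sum>o2\<in>?S. 1/2 * ?Q o1 (b \<noteq> x) * ?Q o2 x)"
      unfolding plus(3) sum_outputs_plus[OF plus(1)] sum_outputs_minus[OF plus(1)]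
      by (intro sum.cong refl synth_plus_combine)
    also have "\<dots> = (\<Sum>b\<in>UNIV. 1/2 * ((\<Sum>o1\<in>?S. ?Q o1 (b \<noteq> x)) * (\<Sum>o2\<in>?S. ?Q o2 x)))"
      unfolding sum_product by (simp add: sum_distrib_left mult.assoc)
    finally show ?thesis
      by (simp add: Suc.IH[OF plus(1,2)] UNIV_bool)
  qed
qed


section \<open>Condition (B) under the minus transform\<close>

text \<open>The error indicator of the decision taken with the likelihoods Q when u was sent
  (ties are broken by a fair coin), and the corresponding step function.\<close>

definition dec_err :: "(bool \<Rightarrow> real) \<Rightarrow> bool \<Rightarrow> real" where
  "dec_err Q u = (if Q (\<not> u) > Q u then 1 else 0) + 1/2 * (if Q (\<not> u) = Q u then 1 else 0)"

definition heaviside :: "real \<Rightarrow> real" where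
  "heaviside t = (if t > 0 then 1 else if t = 0 then 1/2 else 0)"

lemma dec_err_heaviside: "dec_err Q u = heaviside ((if u then 1 else -1) * (Q False - Q True))"
  by (cases u) (auto simp: dec_err_def heaviside_def)

lemma heaviside_neg_product:
  "heaviside (- (s * t) / 2) = heaviside s * (1 - heaviside t) + heaviside t * (1 - heaviside s)"
  by (cases s "0::real" rule: linorder_cases; cases t "0::real" rule: linorder_cases)
    (simp_all add: heaviside_def mult_less_0_iff zero_less_mult_iff)

text \<open>On the minus channel, the decision on u1 xor u2 is wrong iff exactly one of the
  component decisions on u1 and u2 is wrong.\<close>

lemma dec_err_minus:
  "dec_err (\<lambda>b. \<Sum>u2'\<in>UNIV. 1/2 * Q1 (b \<noteq> u2') * Q2 u2') u
     = dec_err Q1 (u \<noteq> u2) * (1 - dec_err Q2 u2) + dec_err Q2 u2 * (1 - dec_err Q1 (u \<noteq> u2))"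
proof -
  have "(if u then 1 else -1)
          * ((\<Sum>u2'\<in>UNIV. 1/2 * Q1 (False \<noteq> u2') * Q2 u2') - (\<Sum>u2'\<in>UNIV. 1/2 * Q1 (True \<noteq> u2') * Q2 u2'))
      = - (((if u \<noteq> u2 then 1 else -1) * (Q1 False - Q1 True))
            * ((if u2 then 1 else -1) * (Q2 False - Q2 True))) / 2"
    by (cases u; cases u2) (simp_all add: UNIV_bool algebra_simps)
  then show ?thesis
    by (simp only: dec_err_heaviside heaviside_neg_product)
qed

lemma dec_err_nonneg: "0 \<le> dec_err Q u"
  by (simp add: dec_err_def)

lemma dec_err_half:
  "0 \<le> Q False \<Longrightarrow> 0 \<le> Q True
     \<Longrightarrow> Q False * dec_err Q False + Q True * dec_err Q True \<le> (Q False + Q True) / 2"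
  by (auto simp: dec_err_def)

definition cond_err :: "('y::finite) channel \<Rightarrow> 'y channel \<Rightarrow> nat \<Rightarrow> nat \<Rightarrow> bool \<Rightarrow> real" where
  "cond_err W V n i u
     = (\<Sum>out\<in>syn_outputs n i. synth W n i out u * dec_err (synth V n i out) u)"

lemma Pe_mis_cond_err: "Pe_mis W V n i = (\<Sum>u\<in>UNIV. 1/2 * cond_err W V n i u)"
  unfolding Pe_mis_def cond_err_def dec_err_def by simp

text \<open>Since W_N^(i)(.|u) is a probability distribution, the correct decisions have the
  complementary weight.\<close>

lemma cond_err_compl:
  fixes W V :: "('y::finite) channel"
  assumes "bdmc W" "1 \<le> i" "i \<le> 2^n"
  shows "(\<Sum>out\<in>syn_outputs n i. synth W n i out u * (1 - dec_err (synth V n i out) u))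
       = 1 - cond_err W V n i u"
  by (simp add: cond_err_def algebra_simps sum_subtractf synth_total[OF assms])

lemma minus_output_error:
  assumes j: "1 \<le> j" and o: "o1 \<in> syn_outputs n j" "o2 \<in> syn_outputs n j"
  shows "synth W (Suc n) (2*j-1) (combine o1 o2) u * dec_err (synth V (Suc n) (2*j-1) (combine o1 o2)) u
       = (\<Sum>u2\<in>UNIV. 1/2 * synth W n j o1 (u \<noteq> u2) * synth W n j o2 u2
           * (dec_err (synth V n j o1) (u \<noteq> u2) * (1 - dec_err (synth V n j o2) u2)
              + dec_err (synth V n j o2) u2 * (1 - dec_err (synth V n j o1) (u \<noteq> u2))))"
proof -
  have err: "dec_err (\<lambda>b. \<Sum>u2'\<in>UNIV. 1/2 * synth V n j o1 (b \<noteq> u2') * synth V n j o2 u2') u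
      = dec_err (synth V n j o1) (u \<noteq> u2) * (1 - dec_err (synth V n j o2) u2)
        + dec_err (synth V n j o2) u2 * (1 - dec_err (synth V n j o1) (u \<noteq> u2))" for u2
    by (rule dec_err_minus)
  show ?thesis
    unfolding synth_minus_combine[OF j o] sum_distrib_right
    by (rule sum.cong[OF refl], rule arg_cong2[where f = times, OF refl err])
qed

lemma cond_err_minus:
  fixes W V :: "('y::finite) channel"
  assumes W: "bdmc W" and j: "1 \<le> j" "j \<le> 2^n"
  shows "cond_err W V (Suc n) (2*j-1) u
       = (\<Sum>u2\<in>UNIV. 1/2 * (cond_err W V n j (u \<noteq> u2) * (1 - cond_err W V n j u2)
                           + cond_err W V n j u2 * (1 - cond_err W V n j (u \<noteq> u2))))"
proof -
  let ?S = "syn_outputs n j" and ?Q = "synth W n j" and ?R = "synth V n j"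
  let ?e = "\<lambda>out x. dec_err (?R out) x"
  have "cond_err W V (Suc n) (2*j-1) u
      = (\<Sum>o1\<in>?S. \<Sum>o2\<in>?S. \<Sum>u2\<in>UNIV. 1/2 * ?Q o1 (u \<noteq> u2) * ?Q o2 u2
           * (?e o1 (u \<noteq> u2) * (1 - ?e o2 u2) + ?e o2 u2 * (1 - ?e o1 (u \<noteq> u2))))"
    unfolding cond_err_def sum_outputs_minus[OF j(1)]
    by (intro sum.cong refl minus_output_error j(1))
  also have "\<dots> = (\<Sum>o1\<in>?S. \<Sum>o2\<in>?S. \<Sum>u2\<in>UNIV. 1/2 * (?Q o1 (u \<noteq> u2) * ?e o1 (u \<noteq> u2)) * (?Q o2 u2 * (1 - ?e o2 u2)))
                + (\<Sum>o1\<in>?S. \<Sum>o2\<in>?S. \<Sum>u2\<in>UNIV. 1/2 * (?Q o1 (u \<noteq> u2) * (1 - ?e o1 (u \<noteq> u2))) * (?Q o2 u2 * ?e o2 u2))"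
    by (simp only: sum.distrib[symmetric]) (intro sum.cong refl; algebra)
  also have "\<dots> = (\<Sum>u2\<in>UNIV. 1/2 * ((\<Sum>o1\<in>?S. ?Q o1 (u \<noteq> u2) * ?e o1 (u \<noteq> u2)) * (\<Sum>o2\<in>?S. ?Q o2 u2 * (1 - ?e o2 u2))))
                + (\<Sum>u2\<in>UNIV. 1/2 * ((\<Sum>o1\<in>?S. ?Q o1 (u \<noteq> u2) * (1 - ?e o1 (u \<noteq> u2))) * (\<Sum>o2\<in>?S. ?Q o2 u2 * ?e o2 u2)))"
    by (simp only: sum_pairs_factor)
  also have "\<dots> = (\<Sum>u2\<in>UNIV. 1/2 * (cond_err W V n j (u \<noteq> u2) * (1 - cond_err W V n j u2)))
                + (\<Sum>u2\<in>UNIV. 1/2 * ((1 - cond_err W V n j (u \<noteq> u2)) * cond_err W V n j u2))"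
    by (simp only: cond_err_compl[OF W j] cond_err_def[symmetric])
  finally show ?thesis
    by (simp add: sum.distrib[symmetric] algebra_simps)
qed

lemma Pe_mis_minus:
  fixes W V :: "('y::finite) channel"
  assumes "bdmc W" "1 \<le> j" "j \<le> 2^n"
  shows "Pe_mis W V (Suc n) (2*j-1) = 2 * Pe_mis W V n j * (1 - Pe_mis W V n j)"
  unfolding Pe_mis_cond_err cond_err_minus[OF assms] by (simp add: UNIV_bool algebra_simps)

lemma Pe_mis_nonneg: "bdmc W \<Longrightarrow> 0 \<le> Pe_mis W V n i"
  unfolding Pe_mis_cond_err cond_err_def
  by (intro sum_nonneg mult_nonneg_nonneg) (simp_all add: synth_nonneg dec_err_nonneg)

lemma Pe_le_half:
  fixes V :: "('y::finite) channel"
  assumes V: "bdmc V" and i: "1 \<le> i" "i \<le> 2^n"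
  shows "Pe V n i \<le> 1/2"
proof -
  let ?S = "syn_outputs n i" and ?R = "synth V n i"
  have "Pe V n i = 1/2 * (\<Sum>out\<in>?S. ?R out False * dec_err (?R out) False + ?R out True * dec_err (?R out) True)"
    unfolding Pe_def Pe_mis_cond_err cond_err_def
    by (simp add: UNIV_bool sum.distrib algebra_simps sum_distrib_left)
  also have "\<dots> \<le> 1/2 * (\<Sum>out\<in>?S. (?R out False + ?R out True) / 2)"
    by (intro mult_left_mono sum_mono dec_err_half) (simp_all add: synth_nonneg[OF V])
  also have "\<dots> = 1/2"
    by (simp add: sum_divide_distrib[symmetric] sum.distrib synth_total[OF V i])
  finally show ?thesis .
qed

text \<open>Condition (B) passes to the minus channel, for arbitrary B-DMCs W and V: the map
  t \<mapsto> 2t(1 - t) is increasing on [0, 1/2].\<close>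

lemma condB_minus:
  fixes W V :: "('y::finite) channel"
  assumes W: "bdmc W" and V: "bdmc V" and i: "1 \<le> i" "i \<le> 2^n" and B: "condB W V n i"
  shows "condB W V (Suc n) (2*i - 1)"
proof -
  let ?a = "Pe_mis W V n i" and ?b = "Pe V n i"
  have "0 \<le> ?a" "?a \<le> ?b" "?b \<le> 1/2"
    using Pe_mis_nonneg[OF W] B Pe_le_half[OF V i] unfolding condB_def by auto
  then have "0 \<le> (?b - ?a) * (1 - ?a - ?b)"
    by (intro mult_nonneg_nonneg) auto
  then show ?thesis
    unfolding condB_def Pe_def Pe_mis_minus[OF W i] Pe_mis_minus[OF V i]
    by (simp add: algebra_simps)
qed



section \<open>Condition (A) holds for every symmetric channel\<close>

text \<open>The first says that some
  involution of Y exchanges A and B; the second that the law of (A, B) under the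
  measure \<mu> is K times its law under the weight B.\<close>

definition swap_symmetric :: "'x set \<Rightarrow> ('x \<Rightarrow> real) \<Rightarrow> ('x \<Rightarrow> real) \<Rightarrow> bool" where
  "swap_symmetric Y A B \<longleftrightarrow> (\<exists>\<sigma>. \<forall>y\<in>Y. \<sigma> y \<in> Y \<and> \<sigma> (\<sigma> y) = y \<and> A (\<sigma> y) = B y \<and> B (\<sigma> y) = A y)"

definition density_ratio ::
    "'x set \<Rightarrow> ('x \<Rightarrow> real) \<Rightarrow> ('x \<Rightarrow> real) \<Rightarrow> ('x \<Rightarrow> real) \<Rightarrow> real \<Rightarrow> bool" where
  "density_ratio Y \<mu> A B K
     \<longleftrightarrow> (\<forall>g. (\<Sum>y\<in>Y. \<mu> y * g (A y) (B y)) = K * (\<Sum>y\<in>Y. B y * g (A y) (B y)))"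

lemma swap_symmetric_sum:
  assumes "swap_symmetric Y A B"
  shows "(\<Sum>y\<in>Y. f (A y) (B y)) = (\<Sum>y\<in>Y. f (B y) (A y))"
proof -
  from assms obtain \<sigma> where \<sigma>: "\<And>y. y \<in> Y \<Longrightarrow> \<sigma> y \<in> Y \<and> \<sigma> (\<sigma> y) = y \<and> A (\<sigma> y) = B y \<and> B (\<sigma> y) = A y"
    unfolding swap_symmetric_def by blast
  show ?thesis
    by (rule sum.reindex_bij_witness[where i = \<sigma> and j = \<sigma>]) (simp_all add: \<sigma>)
qed

lemma swap_symmetric_double:
  assumes "swap_symmetric Y A B"
  shows "(\<Sum>y1\<in>Y. \<Sum>y2\<in>Y. F (A y1) (B y1) (A y2) (B y2))
       = (\<Sum>y1\<in>Y. \<Sum>y2\<in>Y. F (B y1) (A y1) (B y2) (A y2))"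
proof -
  have inner: "(\<Sum>y2\<in>Y. F a b (A y2) (B y2)) = (\<Sum>y2\<in>Y. F a b (B y2) (A y2))" for a b
    by (rule swap_symmetric_sum[OF assms])
  have "(\<Sum>y1\<in>Y. \<Sum>y2\<in>Y. F (A y1) (B y1) (A y2) (B y2))
      = (\<Sum>y1\<in>Y. \<Sum>y2\<in>Y. F (A y1) (B y1) (B y2) (A y2))"
    by (simp only: inner)
  also have "\<dots> = (\<Sum>y1\<in>Y. \<Sum>y2\<in>Y. F (B y1) (A y1) (B y2) (A y2))"
    by (rule swap_symmetric_sum[OF assms, where f = "\<lambda>a b. \<Sum>y2\<in>Y. F a b (B y2) (A y2)"])
  finally show ?thesis .
qed

lemma density_ratio_double:
  assumes "density_ratio Y \<mu> A B K"
  shows "(\<Sum>y1\<in>Y. \<Sum>y2\<in>Y. \<mu> y1 * \<mu> y2 * G (A y1) (B y1) (A y2) (B y2))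
       = K * K * (\<Sum>y1\<in>Y. \<Sum>y2\<in>Y. B y1 * B y2 * G (A y1) (B y1) (A y2) (B y2))"
proof -
  have dens: "(\<Sum>y\<in>Y. \<mu> y * g (A y) (B y)) = K * (\<Sum>y\<in>Y. B y * g (A y) (B y))" for g
    using assms unfolding density_ratio_def by blast
  have "(\<Sum>y1\<in>Y. \<Sum>y2\<in>Y. \<mu> y1 * \<mu> y2 * G (A y1) (B y1) (A y2) (B y2))
      = (\<Sum>y1\<in>Y. \<mu> y1 * (\<Sum>y2\<in>Y. \<mu> y2 * G (A y1) (B y1) (A y2) (B y2)))"
    by (simp add: sum_distrib_left mult.assoc mult.left_commute)
  also have "\<dots> = K * (\<Sum>y1\<in>Y. B y1 * (\<Sum>y2\<in>Y. \<mu> y2 * G (A y1) (B y1) (A y2) (B y2)))"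
    by (rule dens)
  also have "\<dots> = K * (\<Sum>y1\<in>Y. B y1 * (K * (\<Sum>y2\<in>Y. B y2 * G (A y1) (B y1) (A y2) (B y2))))"
    by (simp only: dens)
  also have "\<dots> = K * K * (\<Sum>y1\<in>Y. \<Sum>y2\<in>Y. B y1 * B y2 * G (A y1) (B y1) (A y2) (B y2))"
    by (simp add: sum_distrib_left mult.assoc mult.left_commute)
  finally show ?thesis .
qed

text \<open>The abstract form of condition (A): under both properties, the likelihood ratio
  A/B is more often below 1 than above 1.\<close>

lemma ratio_majority:
  assumes nonneg: "\<And>y. y \<in> Y \<Longrightarrow> 0 \<le> A y" "\<And>y. y \<in> Y \<Longrightarrow> 0 \<le> B y"
    and swap: "swap_symmetric Y A B" and dens: "density_ratio Y \<mu> A B K" and K: "0 \<le> K"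
  shows "(\<Sum>y\<in>Y. \<mu> y * (if A y / B y > 1 then 1 else 0))
       \<le> (\<Sum>y\<in>Y. \<mu> y * (if A y / B y < 1 then 1 else 0))"
proof -
  have "(\<Sum>y\<in>Y. B y * (if A y / B y > 1 then 1 else 0)) \<le> (\<Sum>y\<in>Y. A y * (if A y / B y > 1 then 1 else 0))"
  proof (rule sum_mono)
    fix y assume "y \<in> Y"
    then show "B y * (if A y / B y > 1 then 1 else 0) \<le> A y * (if A y / B y > 1 then 1 else 0)"
      using nonneg[of y] by (auto simp: less_divide_eq split: if_split_asm)
  qed
  also have "\<dots> = (\<Sum>y\<in>Y. B y * (if B y / A y > 1 then 1 else 0))"
    by (rule swap_symmetric_sum[OF swap, where f = "\<lambda>a b. a * (if a / b > 1 then 1 else 0)"])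
  also have "\<dots> \<le> (\<Sum>y\<in>Y. B y * (if A y / B y < 1 then 1 else 0))"
  proof (rule sum_mono)
    fix y assume "y \<in> Y"
    then show "B y * (if B y / A y > 1 then 1 else 0) \<le> B y * (if A y / B y < 1 then 1 else 0)"
      using nonneg[of y] by (auto simp: less_divide_eq divide_less_eq split: if_split_asm)
  qed
  finally have le: "(\<Sum>y\<in>Y. B y * (if A y / B y > 1 then 1 else 0))
      \<le> (\<Sum>y\<in>Y. B y * (if A y / B y < 1 then 1 else 0))" .
  have d: "(\<Sum>y\<in>Y. \<mu> y * g (A y) (B y)) = K * (\<Sum>y\<in>Y. B y * g (A y) (B y))" for g
    using dens unfolding density_ratio_def by blast
  show ?thesis
    using mult_left_mono[OF le K] d[of "\<lambda>a b. if a / b > 1 then 1 else 0"]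
      d[of "\<lambda>a b. if a / b < 1 then 1 else 0"]
    by simp
qed

lemma split_list_half:
  assumes "length ys = N + N"
  obtains y1 y2 where "ys = y1 @ y2" "length y1 = N" "length y2 = N"
  using assms by (intro that[of "take N ys" "drop N ys"]) auto

lemma swap_symmetric_minus:
  fixes A B A' B' :: "'a list \<Rightarrow> real"
  assumes swap: "swap_symmetric {ys. length ys = N} A B"
    and A': "\<And>y1 y2. length y1 = N \<Longrightarrow> length y2 = N \<Longrightarrow> A' (y1 @ y2) = (A y1 * B y2 + B y1 * A y2) / 2"
    and B': "\<And>y1 y2. length y1 = N \<Longrightarrow> length y2 = N \<Longrightarrow> B' (y1 @ y2) = (B y1 * B y2 + A y1 * A y2) / 2"
  shows "swap_symmetric {ys. length ys = N + N} A' B'"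
proof -
  from swap obtain \<sigma> where \<sigma>: "\<And>y. length y = N
      \<Longrightarrow> length (\<sigma> y) = N \<and> \<sigma> (\<sigma> y) = y \<and> A (\<sigma> y) = B y \<and> B (\<sigma> y) = A y"
    unfolding swap_symmetric_def by auto
  define \<tau> where "\<tau> = (\<lambda>ys. \<sigma> (take N ys) @ drop N ys)"
  show ?thesis
    unfolding swap_symmetric_def
  proof (intro exI[of _ \<tau>] ballI)
    fix ys :: "'a list"
    assume "ys \<in> {ys. length ys = N + N}"
    then obtain y1 y2 where ys: "ys = y1 @ y2" "length y1 = N" "length y2 = N"
      using split_list_half by blast
    then show "\<tau> ys \<in> {ys. length ys = N + N} \<and> \<tau> (\<tau> ys) = ys \<and> A' (\<tau> ys) = B' ys \<and> B' (\<tau> ys) = A' ys"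
      using \<sigma>[of y1] by (simp add: \<tau>_def A' B' algebra_simps)
  qed
qed

lemma swap_symmetric_plus:
  fixes A B A' B' :: "'a list \<Rightarrow> real"
  assumes swap: "swap_symmetric {ys. length ys = N} A B"
    and A': "\<And>y1 y2. length y1 = N \<Longrightarrow> length y2 = N \<Longrightarrow> A' (y1 @ y2) = A y1 * A y2 / 2"
    and B': "\<And>y1 y2. length y1 = N \<Longrightarrow> length y2 = N \<Longrightarrow> B' (y1 @ y2) = B y1 * B y2 / 2"
  shows "swap_symmetric {ys. length ys = N + N} A' B'"
proof -
  from swap obtain \<sigma> where \<sigma>: "\<And>y. length y = N
      \<Longrightarrow> length (\<sigma> y) = N \<and> \<sigma> (\<sigma> y) = y \<and> A (\<sigma> y) = B y \<and> B (\<sigma> y) = A y"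
    unfolding swap_symmetric_def by auto
  define \<tau> where "\<tau> = (\<lambda>ys. \<sigma> (take N ys) @ \<sigma> (drop N ys))"
  show ?thesis
    unfolding swap_symmetric_def
  proof (intro exI[of _ \<tau>] ballI)
    fix ys :: "'a list"
    assume "ys \<in> {ys. length ys = N + N}"
    then obtain y1 y2 where ys: "ys = y1 @ y2" "length y1 = N" "length y2 = N"
      using split_list_half by blast
    then show "\<tau> ys \<in> {ys. length ys = N + N} \<and> \<tau> (\<tau> ys) = ys \<and> A' (\<tau> ys) = B' ys \<and> B' (\<tau> ys) = A' ys"
      using \<sigma>[of y1] \<sigma>[of y2] by (simp add: \<tau>_def A' B')
  qed
qed



lemma density_ratio_minus:
  fixes A B A' B' \<mu> :: "'a list \<Rightarrow> real"
  assumes swap: "swap_symmetric {ys. length ys = N} A B" and dens: "density_ratio {ys. length ys = N} \<mu> A B K"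
    and \<mu>: "\<And>y1 y2. \<mu> (y1 @ y2) = \<mu> y1 * \<mu> y2"
    and A': "\<And>y1 y2. length y1 = N \<Longrightarrow> length y2 = N \<Longrightarrow> A' (y1 @ y2) = (A y1 * B y2 + B y1 * A y2) / 2"
    and B': "\<And>y1 y2. length y1 = N \<Longrightarrow> length y2 = N \<Longrightarrow> B' (y1 @ y2) = (B y1 * B y2 + A y1 * A y2) / 2"
  shows "density_ratio {ys. length ys = N + N} \<mu> A' B' (K * K)"
  unfolding density_ratio_def
proof
  fix g :: "real \<Rightarrow> real \<Rightarrow> real"
  let ?L = "{ys. length ys = N}"
  define G where "G = (\<lambda>a1 b1 a2 b2. g ((a1 * b2 + b1 * a2) / 2) ((b1 * b2 + a1 * a2) / 2))"
  have G_swap: "G b1 a1 b2 a2 = G a1 b1 a2 b2" for a1 b1 a2 b2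
    by (simp add: G_def algebra_simps)
  have "(\<Sum>ys\<in>{ys. length ys = N + N}. \<mu> ys * g (A' ys) (B' ys))
      = (\<Sum>y1\<in>?L. \<Sum>y2\<in>?L. \<mu> y1 * \<mu> y2 * G (A y1) (B y1) (A y2) (B y2))"
    unfolding sum_lists_append by (intro sum.cong refl) (simp add: \<mu> A' B' G_def)
  also have "\<dots> = K * K * (\<Sum>y1\<in>?L. \<Sum>y2\<in>?L. B y1 * B y2 * G (A y1) (B y1) (A y2) (B y2))"
    by (rule density_ratio_double[OF dens])
  also have "(\<Sum>y1\<in>?L. \<Sum>y2\<in>?L. B y1 * B y2 * G (A y1) (B y1) (A y2) (B y2))
      = (\<Sum>ys\<in>{ys. length ys = N + N}. B' ys * g (A' ys) (B' ys))"
  proof -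
    have "(\<Sum>y1\<in>?L. \<Sum>y2\<in>?L. A y1 * A y2 * G (A y1) (B y1) (A y2) (B y2))
        = (\<Sum>y1\<in>?L. \<Sum>y2\<in>?L. B y1 * B y2 * G (B y1) (A y1) (B y2) (A y2))"
      by (rule swap_symmetric_double[OF swap])
    then have "(\<Sum>y1\<in>?L. \<Sum>y2\<in>?L. (B y1 * B y2 + A y1 * A y2) / 2 * G (A y1) (B y1) (A y2) (B y2))
        = (\<Sum>y1\<in>?L. \<Sum>y2\<in>?L. B y1 * B y2 * G (A y1) (B y1) (A y2) (B y2))"
      by (simp add: G_swap add_divide_distrib distrib_right sum.distrib sum_divide_distrib[symmetric])
    then show ?thesis
      unfolding sum_lists_append by (simp add: A' B' G_def)
  qed
  finally show "(\<Sum>ys\<in>{ys. length ys = N + N}. \<mu> ys * g (A' ys) (B' ys))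
      = K * K * (\<Sum>ys\<in>{ys. length ys = N + N}. B' ys * g (A' ys) (B' ys))" .
qed

lemma density_ratio_plus:
  fixes A B A' B' \<mu> :: "'a list \<Rightarrow> real"
  assumes dens: "density_ratio {ys. length ys = N} \<mu> A B K"
    and \<mu>: "\<And>y1 y2. \<mu> (y1 @ y2) = \<mu> y1 * \<mu> y2"
    and A': "\<And>y1 y2. length y1 = N \<Longrightarrow> length y2 = N \<Longrightarrow> A' (y1 @ y2) = A y1 * A y2 / 2"
    and B': "\<And>y1 y2. length y1 = N \<Longrightarrow> length y2 = N \<Longrightarrow> B' (y1 @ y2) = B y1 * B y2 / 2"
  shows "density_ratio {ys. length ys = N + N} \<mu> A' B' (2 * K * K)"
  unfolding density_ratio_def
proof
  fix g :: "real \<Rightarrow> real \<Rightarrow> real"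
  let ?L = "{ys. length ys = N}"
  have "(\<Sum>ys\<in>{ys. length ys = N + N}. \<mu> ys * g (A' ys) (B' ys))
      = (\<Sum>y1\<in>?L. \<Sum>y2\<in>?L. \<mu> y1 * \<mu> y2 * g (A y1 * A y2 / 2) (B y1 * B y2 / 2))"
    unfolding sum_lists_append by (intro sum.cong refl) (simp add: \<mu> A' B')
  also have "\<dots> = K * K * (\<Sum>y1\<in>?L. \<Sum>y2\<in>?L. B y1 * B y2 * g (A y1 * A y2 / 2) (B y1 * B y2 / 2))"
    by (rule density_ratio_double[OF dens])
  also have "\<dots> = 2 * K * K * (\<Sum>ys\<in>{ys. length ys = N + N}. B' ys * g (A' ys) (B' ys))"
    unfolding sum_lists_append by (simp add: A' B' sum_distrib_left mult.assoc)
  finally show "(\<Sum>ys\<in>{ys. length ys = N + N}. \<mu> ys * g (A' ys) (B' ys))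
      = 2 * K * K * (\<Sum>ys\<in>{ys. length ys = N + N}. B' ys * g (A' ys) (B' ys))" .
qed


definition lik :: "'y channel \<Rightarrow> nat \<Rightarrow> nat \<Rightarrow> bool \<Rightarrow> 'y list \<Rightarrow> real" where
  "lik V n i u ys = synth V n i (ys, replicate (i - 1) False) u"

definition zero_weight :: "'y channel \<Rightarrow> 'y list \<Rightarrow> real" where
  "zero_weight V ys = (\<Prod>j<length ys. V (ys ! j) False)"

lemma zero_weight_append: "zero_weight V (y1 @ y2) = zero_weight V y1 * zero_weight V y2"
  unfolding zero_weight_def prod_nth_eq_prod_list[of "\<lambda>y. V y False"] by simp

text \<open>With an all-zero prefix, the combined output of the minus channel again has an
  all-zero prefix, so the likelihoods obey the recursions of the paper's context.\<close>

lemma lik_minus: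
  assumes j: "1 \<le> j" and y: "length y1 = 2^n" "length y2 = 2^n"
  shows "lik V (Suc n) (2*j-1) u (y1 @ y2)
       = (\<Sum>u2\<in>UNIV. 1/2 * lik V n j (u \<noteq> u2) y1 * lik V n j u2 y2)"
proof -
  let ?zeros = "replicate (j - 1) False"
  have "2*j - 1 - 1 = 2 * (j - 1)"
    using j by simp
  then have "(y1 @ y2, replicate (2*j - 1 - 1) False) = combine (y1, ?zeros) (y2, ?zeros)"
    by (simp add: combine_def xor_list_replicate interleave_replicate)
  moreover have "(y1, ?zeros) \<in> syn_outputs n j" "(y2, ?zeros) \<in> syn_outputs n j"
    using y by (simp_all add: syn_outputs_def)
  ultimately show ?thesis
    unfolding lik_def by (simp only: synth_minus_combine[OF j])
qed

lemma lik_plus: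
  assumes j: "1 \<le> j" and y: "length y1 = 2^n" "length y2 = 2^n"
  shows "lik V (Suc n) (2*j) u (y1 @ y2) = 1/2 * lik V n j u y1 * lik V n j u y2"
proof -
  let ?zeros = "replicate (j - 1) False"
  let ?o = "combine (y1, ?zeros) (y2, ?zeros)"
  have "2*j - 1 = Suc (2 * (j - 1))"
    using j by simp
  then have "(y1 @ y2, replicate (2*j - 1) False) = (fst ?o, snd ?o @ [False])"
    by (simp add: combine_def xor_list_replicate interleave_replicate replicate_append_same)
  moreover have "(y1, ?zeros) \<in> syn_outputs n j" "(y2, ?zeros) \<in> syn_outputs n j"
    using y by (simp_all add: syn_outputs_def)
  ultimately show ?thesis
    unfolding lik_def by (simp only: synth_plus_combine) simp
qed

definition lr_invariant :: "('y::finite) channel \<Rightarrow> nat \<Rightarrow> nat \<Rightarrow> bool" where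
  "lr_invariant V n i \<longleftrightarrow> swap_symmetric {ys. length ys = 2^n} (lik V n i True) (lik V n i False)
     \<and> (\<exists>K\<ge>0. density_ratio {ys. length ys = 2^n} (zero_weight V) (lik V n i True) (lik V n i False) K)"

text \<open>For N = 1 the involution is the symmetrizing permutation and K = 1.\<close>

lemma lr_invariant_base:
  fixes V :: "('y::finite) channel"
  assumes \<pi>: "\<forall>y. \<pi> (\<pi> y) = y" "\<forall>y. V y True = V (\<pi> y) False"
  shows "lr_invariant V 0 i"
proof -
  have lik0: "lik V 0 i u ys = V (hd ys) u" for u ys
    by (simp add: lik_def)
  have "swap_symmetric {ys. length ys = 2^0} (lik V 0 i True) (lik V 0 i False)"
    unfolding swap_symmetric_def lik0 using \<pi>
    by (intro exI[of _ "map \<pi>"]) (auto simp: length_Suc_conv)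
  moreover have "density_ratio {ys. length ys = 2^0} (zero_weight V) (lik V 0 i True) (lik V 0 i False) 1"
    unfolding density_ratio_def lik0
    by (auto simp: zero_weight_def length_Suc_conv intro!: sum.cong)
  ultimately show ?thesis
    unfolding lr_invariant_def using zero_le_one by blast
qed

lemma lr_invariant_children:
  fixes V :: "('y::finite) channel"
  assumes inv: "lr_invariant V n j" and j: "1 \<le> j"
  shows "lr_invariant V (Suc n) (2*j-1)" "lr_invariant V (Suc n) (2*j)"
proof -
  have L: "{ys :: 'y list. length ys = 2^Suc n} = {ys. length ys = 2^n + 2^n}"
    by (simp add: mult_2)
  from inv obtain K where K: "0 \<le> K"
    and swap: "swap_symmetric {ys. length ys = 2^n} (lik V n j True) (lik V n j False)"
    and dens: "density_ratio {ys. length ys = 2^n} (zero_weight V) (lik V n j True) (lik V n j False) K"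
    unfolding lr_invariant_def by blast
  have "swap_symmetric {ys. length ys = 2^n + 2^n} (lik V (Suc n) (2*j-1) True) (lik V (Suc n) (2*j-1) False)"
    by (rule swap_symmetric_minus[OF swap]) (simp_all only: lik_minus[OF j], simp_all add: UNIV_bool algebra_simps)
  moreover have "density_ratio {ys. length ys = 2^n + 2^n} (zero_weight V)
      (lik V (Suc n) (2*j-1) True) (lik V (Suc n) (2*j-1) False) (K * K)"
    by (rule density_ratio_minus[OF swap dens zero_weight_append])
      (simp_all only: lik_minus[OF j], simp_all add: UNIV_bool algebra_simps)
  ultimately show "lr_invariant V (Suc n) (2*j-1)"
    unfolding lr_invariant_def L using mult_nonneg_nonneg[OF K K] by blast
  have "swap_symmetric {ys. length ys = 2^n + 2^n} (lik V (Suc n) (2*j) True) (lik V (Suc n) (2*j) False)"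
    by (rule swap_symmetric_plus[OF swap]) (simp_all add: lik_plus[OF j])
  moreover have "density_ratio {ys. length ys = 2^n + 2^n} (zero_weight V)
      (lik V (Suc n) (2*j) True) (lik V (Suc n) (2*j) False) (2 * K * K)"
    by (rule density_ratio_plus[OF dens zero_weight_append]) (simp_all add: lik_plus[OF j])
  moreover have "0 \<le> 2 * K * K"
    using K by simp
  ultimately show "lr_invariant V (Suc n) (2*j)"
    unfolding lr_invariant_def L by blast
qed

lemma lr_invariant_all:
  fixes V :: "('y::finite) channel"
  assumes "\<forall>y. \<pi> (\<pi> y) = y" "\<forall>y. V y True = V (\<pi> y) False"
  shows "1 \<le> i \<Longrightarrow> i \<le> 2^n \<Longrightarrow> lr_invariant V n i"
proof (induction n arbitrary: i)
  case 0
  show ?case by (rule lr_invariant_base[OF assms])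
next
  case (Suc n)
  from Suc.prems show ?case
  proof (cases rule: child_index_cases)
    case (minus j)
    then show ?thesis using lr_invariant_children(1)[OF Suc.IH] by simp
  next
    case (plus j)
    then show ?thesis using lr_invariant_children(2)[OF Suc.IH] by simp
  qed
qed

lemma condA_symmetric:
  fixes V :: "('y::finite) channel"
  assumes V: "bdmc V" and \<pi>: "\<forall>y. \<pi> (\<pi> y) = y" "\<forall>y. V y True = V (\<pi> y) False"
    and i: "1 \<le> i" "i \<le> 2^n"
  shows "condA V n i"
proof -
  from lr_invariant_all[OF \<pi> i] obtain K where K: "0 \<le> K"
    and swap: "swap_symmetric {ys. length ys = 2^n} (lik V n i True) (lik V n i False)"
    and dens: "density_ratio {ys. length ys = 2^n} (zero_weight V) (lik V n i True) (lik V n i False) K"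
    unfolding lr_invariant_def by blast
  have "prob_zero V n (\<lambda>ys. LR V n i ys > 1) = (\<Sum>ys\<in>{ys. length ys = 2^n}.
          zero_weight V ys * (if lik V n i True ys / lik V n i False ys > 1 then 1 else 0))"
    "prob_zero V n (\<lambda>ys. LR V n i ys < 1) = (\<Sum>ys\<in>{ys. length ys = 2^n}.
          zero_weight V ys * (if lik V n i True ys / lik V n i False ys < 1 then 1 else 0))"
    by (simp_all add: prob_zero_def zero_weight_def LR_def lik_def)
  then show ?thesis
    unfolding condA_def
    using ratio_majority[OF _ _ swap dens K] synth_nonneg[OF V] by (simp add: lik_def)
qed


section \<open>The counterexample for the plus transform\<close>

lemma Pe_mis_0_1:
  fixes W V :: "('y::finite) channel"
  shows "Pe_mis W V 0 1 = (\<Sum>u\<in>UNIV. 1/2 * (\<Sum>y\<in>UNIV. W y u * dec_err (V y) u))"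
  unfolding Pe_mis_cond_err cond_err_def sum_outputs_0_1 by simp

lemma Pe_mis_1_2:
  fixes W V :: "('y::finite) channel"
  shows "Pe_mis W V (Suc 0) 2 = (\<Sum>u\<in>UNIV. 1/2 * (\<Sum>b\<in>UNIV. \<Sum>y1\<in>UNIV. \<Sum>y2\<in>UNIV.
      1/2 * W y1 (b \<noteq> u) * W y2 u * dec_err (\<lambda>x. 1/2 * V y1 (b \<noteq> x) * V y2 x) u))"
proof -
  have outputs: "(\<Sum>out\<in>syn_outputs (Suc 0) 2. G out)
      = (\<Sum>b\<in>UNIV. \<Sum>y1\<in>UNIV. \<Sum>y2\<in>UNIV. G (fst (combine ([y1], []) ([y2], [])), snd (combine ([y1], []) ([y2], [])) @ [b]))"
    for G :: "'y list \<times> bool list \<Rightarrow> real"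
    by (simp only: sum_outputs_plus[OF order.refl, where n = 0, unfolded mult_1_right]
        sum_outputs_minus[OF order.refl, where n = 0, unfolded mult_1_right] sum_outputs_0_1)
  have mem: "([y], []) \<in> syn_outputs 0 1" for y :: 'y
    by (simp add: syn_outputs_def)
  have val: "synth X (Suc 0) 2 (fst (combine ([y1], []) ([y2], [])), snd (combine ([y1], []) ([y2], [])) @ [b])
      = (\<lambda>x. 1/2 * X y1 (b \<noteq> x) * X y2 x)" for X :: "'y channel" and y1 y2 b
    using synth_plus_combine[OF mem mem, where W = X and b = b] by auto
  show ?thesis
    unfolding Pe_mis_cond_err cond_err_def outputs val ..
qed

lemma bdmc_W_ex: "bdmc W_ex"
  unfolding bdmc_def
proof (intro conjI allI)
  fix y x show "0 \<le> W_ex y x"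
    by (cases y; cases x) (simp_all add: W_ex_def swap01_def)
next
  fix x show "(\<Sum>y\<in>UNIV. W_ex y x) = 1"
    by (cases x) (simp_all add: UNIV_Y3 W_ex_def swap01_def)
qed

lemma bdmc_V_ex: "bdmc V_ex"
  unfolding bdmc_def
proof (intro conjI allI)
  fix y x show "0 \<le> V_ex y x"
    by (cases y; cases x) (simp_all add: V_ex_def swap01_def)
next
  fix x show "(\<Sum>y\<in>UNIV. V_ex y x) = 1"
    by (cases x) (simp_all add: UNIV_Y3 V_ex_def swap01_def)
qed

lemma swap01_swap01: "swap01 (swap01 y) = y"
  by (cases y) (simp_all add: swap01_def)

lemma W_ex_sym: "W_ex y True = W_ex (swap01 y) False"
  by (cases y) (simp_all add: W_ex_def swap01_def)

lemma V_ex_sym: "V_ex y True = V_ex (swap01 y) False"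
  by (cases y) (simp_all add: V_ex_def swap01_def)

lemma sym_same_perm_ex: "sym_same_perm W_ex V_ex"
  unfolding sym_same_perm_def
  by (intro exI[of _ swap01] conjI allI bijI' W_ex_sym V_ex_sym swap01_swap01) (metis swap01_swap01)+

text \<open>Pe_1^(1)(W,V) = 0.3 <= 0.35 = Pe_1^(1)(V), while Pe_2^(2)(W,V) = 0.3 > 0.275 = Pe_2^(2)(V).\<close>

lemma condB_ex_1: "condB W_ex V_ex 0 1"
  unfolding condB_def Pe_def Pe_mis_0_1
  by (simp add: UNIV_Y3 UNIV_bool W_ex_def V_ex_def swap01_def dec_err_def)

lemma not_condB_ex_2: "\<not> condB W_ex V_ex 1 2"
  unfolding condB_def Pe_def One_nat_def Pe_mis_1_2
  by (simp add: UNIV_Y3 UNIV_bool W_ex_def V_ex_def swap01_def dec_err_def)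


theorem theorem3:
  fixes W V :: "('y::finite) channel"
  shows "(bdmc W \<and> bdmc V \<and> sym_same_perm W V \<longrightarrow>
           (\<forall>n i. 1 \<le> i \<and> i \<le> 2^n \<and> condA V n i \<and> condB W V n i \<longrightarrow>
              condA V (Suc n) (2*i - 1) \<and> condB W V (Suc n) (2*i - 1) \<and>
              condA V (Suc n) (2*i)))
       \<and> (bdmc W_ex \<and> bdmc V_ex \<and> sym_same_perm W_ex V_ex \<and>
          condA V_ex 0 1 \<and> condB W_ex V_ex 0 1 \<and> \<not> condB W_ex V_ex 1 2)"
proof (intro conjI impI allI)
  fix n i
  assume channels: "bdmc W \<and> bdmc V \<and> sym_same_perm W V"
    and hyp: "1 \<le> i \<and> i \<le> 2^n \<and> condA V n i \<and> condB W V n i"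
  then obtain \<pi> where \<pi>: "\<forall>y. \<pi> (\<pi> y) = y" "\<forall>y. V y True = V (\<pi> y) False"
    unfolding sym_same_perm_def by blast
  have i: "1 \<le> 2*i - 1" "2*i - 1 \<le> 2^Suc n" "1 \<le> 2*i" "2*i \<le> 2^Suc n"
    using hyp by auto
  show "condA V (Suc n) (2*i - 1)" "condA V (Suc n) (2*i)"
    using condA_symmetric[OF _ \<pi>] channels i by auto
  show "condB W V (Suc n) (2*i - 1)"
    using condB_minus channels hyp by blast
next
  have \<pi>: "\<forall>y. swap01 (swap01 y) = y" "\<forall>y. V_ex y True = V_ex (swap01 y) False"
    by (simp_all add: swap01_swap01 V_ex_sym)
  show "condA V_ex 0 1"
    by (rule condA_symmetric[OF bdmc_V_ex \<pi>]) simp_all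
qed (fact bdmc_W_ex bdmc_V_ex sym_same_perm_ex condB_ex_1 not_condB_ex_2)+

end
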